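(* Let $(L,\delta,\alpha,\beta)$, $(V,\mu,\alpha_V,\beta_V)$ and $(M,d',\alpha_M,\beta_M)$ be BiHom-Lie algebras and let $$E:\ 0\longrightarrow (V,\mu,\alpha_V,\beta_V)\xrightarrow{\ i\ }(M,d',\alpha_M,\beta_M)\xrightarrow{\ \pi\ }(L,\delta,\alpha,\beta)\longrightarrow 0$$ be a split extension of $L$ by $V$. Then there exist bilinear maps $\lambda_l\colon L\times V\to V$, $\lambda_r\colon V\times L\to V$, $\theta\colon L\times L\to V$ such that, with $d\colon (L\oplus V)^2\to L\oplus V$ defined by $$d(x+v,y+w)=\delta(x,y)+\theta(x,y)+\lambda_l(x,w)+\lambda_r(v,y)+\mu(v,w)\qquad(x,y\in L,\ v,w\in V),$$ the pair $(\lambda_l,\lambda_r)$ is a representation of $L$ on $(V,\alpha_V,\beta_V)$, $\theta$ is a $2$-cocycle of $L$ on $V$ with respect to it, and $$E_0:\ 0\longrightarrow (V,\mu,\alpha_V,\beta_V)\xrightarrow{\ i_0\ }(L\oplus V,d,\alpha+\alpha_V,\beta+\beta_V)\xrightarrow{\ \pi_0\ }(L,\delta,\alpha,\beta)\longrightarrow 0,$$ where $i_0(v)=v$ and $\pi_0(x+v)=x$, is a split extension of $L$ by $V$ which is equivalent to $E$.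
   Context: All vector spaces are over a field $\mathbb{K}$. A BiHom-Lie algebra $(L,[\cdot,\cdot],\alpha,\beta)$ is a vector space $L$ with a bilinear map $[\cdot,\cdot]\colon L\times L\to L$ and linear maps $\alpha,\beta\colon L\to L$ such that $\alpha\circ\beta=\beta\circ\alpha$, $[\beta(x),\alpha(y)]=-[\beta(y),\alpha(x)]$, and $[\beta^2(x),[\beta(y),\alpha(z)]]+[\beta^2(y),[\beta(z),\alpha(x)]]+[\beta^2(z),[\beta(x),\alpha(y)]]=0$ for all $x,y,z$ ($\alpha,\beta$ need not be multiplicative). A morphism $f\colon(L,[\cdot,\cdot],\alpha,\beta)\to(L',[\cdot,\cdot]',\alpha',\beta')$ is a linear map with $f\circ\alpha=\alpha'\circ f$, $f\circ\beta=\beta'\circ f$, $f([x,y])=[f(x),f(y)]'$. A BiHom-subalgebra of $(M,d,\alpha_M,\beta_M)$ is a subspace $H$ with $\alpha_M(H)\subset H$, $\beta_M(H)\subset H$, $d(H,H)\subset H$. On $L\oplus V$, $\alpha+\alpha_V$ denotes $x+v\mapsto\alpha(x)+\alpha_V(v)$, similarly $\beta+\beta_V$. An extension of $(L,\delta,\alpha,\beta)$ by $(V,\mu,\alpha_V,\beta_V)$ is a sequence $0\to V\xrightarrow{i}M\xrightarrow{\pi}L\to0$ of BiHom-Lie algebras and morphisms with $i$ injective, $\pi$ surjective, $\mathrm{Im}(i)=\ker(\pi)$. It is split if there is a BiHom-subalgebra $S\subset M$ with $M=S\oplus\ker\pi$. Two extensions $0\to V_1\xrightarrow{i_1}M_1\xrightarrow{\pi_1}L_1\to0$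 and $0\to V_2\xrightarrow{i_2}M_2\xrightarrow{\pi_2}L_2\to0$ are equivalent if there are linear maps $\varphi\colon V_1\to V_2$, $s\colon L_1\to L_2$ and an isomorphism of BiHom-Lie algebras $\Phi\colon M_1\to M_2$ with $\Phi\circ i_1=i_2\circ\varphi$ and $\pi_2\circ\Phi=s\circ\pi_1$. A representation of $(L,\delta,\alpha,\beta)$ on $(V,\alpha_V,\beta_V)$ (with $\alpha_V\beta_V=\beta_V\alpha_V$) is a pair of bilinear maps $\lambda_l\colon L\times V\to V$, $\lambda_r\colon V\times L\to V$ with, for all $x,y\in L$, $v\in V$: $\lambda_r(\beta_V(v),\alpha(y))=-\lambda_l(\beta(y),\alpha_V(v))$ and $\lambda_l(\beta^2(x),\lambda_l(\beta(y),\alpha_V(v)))+\lambda_l(\beta^2(y),\lambda_r(\beta_V(v),\alpha(x)))+\lambda_r(\beta_V^2(v),\delta(\beta(x),\alpha(y)))=0$. A $2$-cocycle of $L$ on $V$ with respect to it is a bilinear $\theta\colon L\times L\to V$ with $\theta(\beta(x),\alpha(y))=-\theta(\beta(y),\alpha(x))$ and $\theta(\beta^2(x),\delta(\beta(y),\alpha(z)))-\theta(\beta^2(y),\delta(\beta(x),\alpha(z)))+\theta(\beta^2(z),\delta(\beta(x),\alpha(y)))+\lambda_l(\beta^2(x),\theta(\beta(y),\alpha(z)))-\lambda_l(\beta^2(y),\theta(\beta(x),\alpha(z)))+\lambda_l(\beta^2(z),\theta(\beta(x),\alpha(y)))=0$ for all $x,y,z\in L$. *)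

theory Defs
  imports "HOL-Analysis.Analysis"
begin

text \<open>Vector spaces over a field 'k are carried by types of class ab_group_add
  together with an explicit scalar multiplication satisfying the vector_space axioms.\<close>

definition bilinear_map ::
  "('k::field \<Rightarrow> 'a::ab_group_add \<Rightarrow> 'a) \<Rightarrow> ('k \<Rightarrow> 'b::ab_group_add \<Rightarrow> 'b) \<Rightarrow>
   ('k \<Rightarrow> 'c::ab_group_add \<Rightarrow> 'c) \<Rightarrow> ('a \<Rightarrow> 'b \<Rightarrow> 'c) \<Rightarrow> bool" where
  "bilinear_map s1 s2 s3 f \<longleftrightarrow>
     (\<forall>x. Vector_Spaces.linear s2 s3 (f x)) \<and> (\<forall>y. Vector_Spaces.linear s1 s3 (\<lambda>x. f x y))"

definition BiHomLie ::
  "('k::field \<Rightarrow> 'a::ab_group_add \<Rightarrow> 'a) \<Rightarrow> ('a \<Rightarrow> 'a \<Rightarrow> 'a) \<Rightarrow> ('a \<Rightarrow> 'a) \<Rightarrow> ('a \<Rightarrow> 'a) \<Rightarrow> bool" where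
  "BiHomLie s br \<alpha> \<beta> \<longleftrightarrow>
     bilinear_map s s s br \<and> Vector_Spaces.linear s s \<alpha> \<and> Vector_Spaces.linear s s \<beta> \<and>
     \<alpha> \<circ> \<beta> = \<beta> \<circ> \<alpha> \<and>
     (\<forall>x y. br (\<beta> x) (\<alpha> y) = - br (\<beta> y) (\<alpha> x)) \<and>
     (\<forall>x y z. br (\<beta> (\<beta> x)) (br (\<beta> y) (\<alpha> z)) + br (\<beta> (\<beta> y)) (br (\<beta> z) (\<alpha> x))
              + br (\<beta> (\<beta> z)) (br (\<beta> x) (\<alpha> y)) = 0)"

definition BiHom_morphism ::
  "('k::field \<Rightarrow> 'a::ab_group_add \<Rightarrow> 'a) \<Rightarrow> ('a \<Rightarrow> 'a \<Rightarrow> 'a) \<Rightarrow> ('a \<Rightarrow> 'a) \<Rightarrow> ('a \<Rightarrow> 'a) \<Rightarrow>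
   ('k \<Rightarrow> 'b::ab_group_add \<Rightarrow> 'b) \<Rightarrow> ('b \<Rightarrow> 'b \<Rightarrow> 'b) \<Rightarrow> ('b \<Rightarrow> 'b) \<Rightarrow> ('b \<Rightarrow> 'b) \<Rightarrow>
   ('a \<Rightarrow> 'b) \<Rightarrow> bool" where
  "BiHom_morphism s br \<alpha> \<beta> s' br' \<alpha>' \<beta>' f \<longleftrightarrow>
     Vector_Spaces.linear s s' f \<and> f \<circ> \<alpha> = \<alpha>' \<circ> f \<and> f \<circ> \<beta> = \<beta>' \<circ> f \<and>
     (\<forall>x y. f (br x y) = br' (f x) (f y))"

definition BiHom_iso ::
  "('k::field \<Rightarrow> 'a::ab_group_add \<Rightarrow> 'a) \<Rightarrow> ('a \<Rightarrow> 'a \<Rightarrow> 'a) \<Rightarrow> ('a \<Rightarrow> 'a) \<Rightarrow> ('a \<Rightarrow> 'a) \<Rightarrow>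
   ('k \<Rightarrow> 'b::ab_group_add \<Rightarrow> 'b) \<Rightarrow> ('b \<Rightarrow> 'b \<Rightarrow> 'b) \<Rightarrow> ('b \<Rightarrow> 'b) \<Rightarrow> ('b \<Rightarrow> 'b) \<Rightarrow>
   ('a \<Rightarrow> 'b) \<Rightarrow> bool" where
  "BiHom_iso s br \<alpha> \<beta> s' br' \<alpha>' \<beta>' f \<longleftrightarrow>
     BiHom_morphism s br \<alpha> \<beta> s' br' \<alpha>' \<beta>' f \<and> bij f \<and>
     BiHom_morphism s' br' \<alpha>' \<beta>' s br \<alpha> \<beta> (inv f)"

definition BiHom_subalgebra ::
  "('k::field \<Rightarrow> 'a::ab_group_add \<Rightarrow> 'a) \<Rightarrow> ('a \<Rightarrow> 'a \<Rightarrow> 'a) \<Rightarrow> ('a \<Rightarrow> 'a) \<Rightarrow> ('a \<Rightarrow> 'a) \<Rightarrow>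
   'a set \<Rightarrow> bool" where
  "BiHom_subalgebra s br \<alpha> \<beta> H \<longleftrightarrow>
     module.subspace s H \<and> \<alpha> ` H \<subseteq> H \<and> \<beta> ` H \<subseteq> H \<and>
     (\<forall>x\<in>H. \<forall>y\<in>H. br x y \<in> H)"

definition BiHom_extension ::
  "('k::field \<Rightarrow> 'v::ab_group_add \<Rightarrow> 'v) \<Rightarrow> ('v \<Rightarrow> 'v \<Rightarrow> 'v) \<Rightarrow> ('v \<Rightarrow> 'v) \<Rightarrow> ('v \<Rightarrow> 'v) \<Rightarrow>
   ('k \<Rightarrow> 'm::ab_group_add \<Rightarrow> 'm) \<Rightarrow> ('m \<Rightarrow> 'm \<Rightarrow> 'm) \<Rightarrow> ('m \<Rightarrow> 'm) \<Rightarrow> ('m \<Rightarrow> 'm) \<Rightarrow>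
   ('k \<Rightarrow> 'l::ab_group_add \<Rightarrow> 'l) \<Rightarrow> ('l \<Rightarrow> 'l \<Rightarrow> 'l) \<Rightarrow> ('l \<Rightarrow> 'l) \<Rightarrow> ('l \<Rightarrow> 'l) \<Rightarrow>
   ('v \<Rightarrow> 'm) \<Rightarrow> ('m \<Rightarrow> 'l) \<Rightarrow> bool" where
  "BiHom_extension sV \<mu> \<alpha>V \<beta>V sM dM \<alpha>M \<beta>M sL \<delta> \<alpha> \<beta> i \<pi> \<longleftrightarrow>
     BiHomLie sV \<mu> \<alpha>V \<beta>V \<and> BiHomLie sM dM \<alpha>M \<beta>M \<and> BiHomLie sL \<delta> \<alpha> \<beta> \<and>
     BiHom_morphism sV \<mu> \<alpha>V \<beta>V sM dM \<alpha>M \<beta>M i \<and>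
     BiHom_morphism sM dM \<alpha>M \<beta>M sL \<delta> \<alpha> \<beta> \<pi> \<and>
     inj i \<and> surj \<pi> \<and> range i = {m. \<pi> m = 0}"

definition BiHom_split_extension ::
  "('k::field \<Rightarrow> 'v::ab_group_add \<Rightarrow> 'v) \<Rightarrow> ('v \<Rightarrow> 'v \<Rightarrow> 'v) \<Rightarrow> ('v \<Rightarrow> 'v) \<Rightarrow> ('v \<Rightarrow> 'v) \<Rightarrow>
   ('k \<Rightarrow> 'm::ab_group_add \<Rightarrow> 'm) \<Rightarrow> ('m \<Rightarrow> 'm \<Rightarrow> 'm) \<Rightarrow> ('m \<Rightarrow> 'm) \<Rightarrow> ('m \<Rightarrow> 'm) \<Rightarrow>
   ('k \<Rightarrow> 'l::ab_group_add \<Rightarrow> 'l) \<Rightarrow> ('l \<Rightarrow> 'l \<Rightarrow> 'l) \<Rightarrow> ('l \<Rightarrow> 'l) \<Rightarrow> ('l \<Rightarrow> 'l) \<Rightarrow>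
   ('v \<Rightarrow> 'm) \<Rightarrow> ('m \<Rightarrow> 'l) \<Rightarrow> bool" where
  "BiHom_split_extension sV \<mu> \<alpha>V \<beta>V sM dM \<alpha>M \<beta>M sL \<delta> \<alpha> \<beta> i \<pi> \<longleftrightarrow>
     BiHom_extension sV \<mu> \<alpha>V \<beta>V sM dM \<alpha>M \<beta>M sL \<delta> \<alpha> \<beta> i \<pi> \<and>
     (\<exists>S. BiHom_subalgebra sM dM \<alpha>M \<beta>M S \<and>
          (\<forall>m. \<exists>!p. fst p \<in> S \<and> \<pi> (snd p) = 0 \<and> m = fst p + snd p))"

definition BiHom_ext_equivalent ::
  "('k::field \<Rightarrow> 'v1::ab_group_add \<Rightarrow> 'v1) \<Rightarrow>
   ('k \<Rightarrow> 'm1::ab_group_add \<Rightarrow> 'm1) \<Rightarrow> ('m1 \<Rightarrow> 'm1 \<Rightarrow> 'm1) \<Rightarrow> ('m1 \<Rightarrow> 'm1) \<Rightarrow> ('m1 \<Rightarrow> 'm1) \<Rightarrow>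
   ('k \<Rightarrow> 'l1::ab_group_add \<Rightarrow> 'l1) \<Rightarrow> ('v1 \<Rightarrow> 'm1) \<Rightarrow> ('m1 \<Rightarrow> 'l1) \<Rightarrow>
   ('k \<Rightarrow> 'v2::ab_group_add \<Rightarrow> 'v2) \<Rightarrow>
   ('k \<Rightarrow> 'm2::ab_group_add \<Rightarrow> 'm2) \<Rightarrow> ('m2 \<Rightarrow> 'm2 \<Rightarrow> 'm2) \<Rightarrow> ('m2 \<Rightarrow> 'm2) \<Rightarrow> ('m2 \<Rightarrow> 'm2) \<Rightarrow>
   ('k \<Rightarrow> 'l2::ab_group_add \<Rightarrow> 'l2) \<Rightarrow> ('v2 \<Rightarrow> 'm2) \<Rightarrow> ('m2 \<Rightarrow> 'l2) \<Rightarrow> bool" where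
  "BiHom_ext_equivalent sV1 sM1 d1 \<alpha>1 \<beta>1 sL1 i1 \<pi>1 sV2 sM2 d2 \<alpha>2 \<beta>2 sL2 i2 \<pi>2 \<longleftrightarrow>
     (\<exists>\<phi> s \<Phi>. Vector_Spaces.linear sV1 sV2 \<phi> \<and> Vector_Spaces.linear sL1 sL2 s \<and>
        BiHom_iso sM1 d1 \<alpha>1 \<beta>1 sM2 d2 \<alpha>2 \<beta>2 \<Phi> \<and>
        \<Phi> \<circ> i1 = i2 \<circ> \<phi> \<and> \<pi>2 \<circ> \<Phi> = s \<circ> \<pi>1)"

definition BiHom_representation ::
  "('l \<Rightarrow> 'l \<Rightarrow> 'l) \<Rightarrow> ('l \<Rightarrow> 'l) \<Rightarrow> ('l \<Rightarrow> 'l) \<Rightarrow> ('v::ab_group_add \<Rightarrow> 'v) \<Rightarrow> ('v \<Rightarrow> 'v) \<Rightarrow>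
   ('l \<Rightarrow> 'v \<Rightarrow> 'v) \<Rightarrow> ('v \<Rightarrow> 'l \<Rightarrow> 'v) \<Rightarrow> bool" where
  "BiHom_representation \<delta> \<alpha> \<beta> \<alpha>V \<beta>V ll lr \<longleftrightarrow>
     \<alpha>V \<circ> \<beta>V = \<beta>V \<circ> \<alpha>V \<and>
     (\<forall>y v. lr (\<beta>V v) (\<alpha> y) = - ll (\<beta> y) (\<alpha>V v)) \<and>
     (\<forall>x y v. ll (\<beta> (\<beta> x)) (ll (\<beta> y) (\<alpha>V v)) + ll (\<beta> (\<beta> y)) (lr (\<beta>V v) (\<alpha> x))
              + lr (\<beta>V (\<beta>V v)) (\<delta> (\<beta> x) (\<alpha> y)) = 0)"

definition BiHom_2cocycle ::
  "('l \<Rightarrow> 'l \<Rightarrow> 'l) \<Rightarrow> ('l \<Rightarrow> 'l) \<Rightarrow> ('l \<Rightarrow> 'l) \<Rightarrow> ('l \<Rightarrow> 'v::ab_group_add \<Rightarrow> 'v) \<Rightarrow>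
   ('l \<Rightarrow> 'l \<Rightarrow> 'v) \<Rightarrow> bool" where
  "BiHom_2cocycle \<delta> \<alpha> \<beta> ll \<theta> \<longleftrightarrow>
     (\<forall>x y. \<theta> (\<beta> x) (\<alpha> y) = - \<theta> (\<beta> y) (\<alpha> x)) \<and>
     (\<forall>x y z. \<theta> (\<beta> (\<beta> x)) (\<delta> (\<beta> y) (\<alpha> z)) - \<theta> (\<beta> (\<beta> y)) (\<delta> (\<beta> x) (\<alpha> z))
              + \<theta> (\<beta> (\<beta> z)) (\<delta> (\<beta> x) (\<alpha> y))
              + ll (\<beta> (\<beta> x)) (\<theta> (\<beta> y) (\<alpha> z)) - ll (\<beta> (\<beta> y)) (\<theta> (\<beta> x) (\<alpha> z))
              + ll (\<beta> (\<beta> z)) (\<theta> (\<beta> x) (\<alpha> y)) = 0)"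

text \<open>The direct sum L \<oplus> V is modelled as the product type; x + v is (x, v).\<close>
definition sum_scale :: "('k \<Rightarrow> 'l \<Rightarrow> 'l) \<Rightarrow> ('k \<Rightarrow> 'v \<Rightarrow> 'v) \<Rightarrow> 'k \<Rightarrow> 'l \<times> 'v \<Rightarrow> 'l \<times> 'v" where
  "sum_scale sL sV c p = (sL c (fst p), sV c (snd p))"

definition sum_map :: "('l \<Rightarrow> 'l) \<Rightarrow> ('v \<Rightarrow> 'v) \<Rightarrow> 'l \<times> 'v \<Rightarrow> 'l \<times> 'v" where
  "sum_map f g p = (f (fst p), g (snd p))"

definition semidirect_bracket ::
  "('l \<Rightarrow> 'l \<Rightarrow> 'l) \<Rightarrow> ('l \<Rightarrow> 'l \<Rightarrow> 'v::ab_group_add) \<Rightarrow> ('l \<Rightarrow> 'v \<Rightarrow> 'v) \<Rightarrow> ('v \<Rightarrow> 'l \<Rightarrow> 'v) \<Rightarrow>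
   ('v \<Rightarrow> 'v \<Rightarrow> 'v) \<Rightarrow> 'l \<times> 'v \<Rightarrow> 'l \<times> 'v \<Rightarrow> 'l \<times> 'v" where
  "semidirect_bracket \<delta> \<theta> ll lr \<mu> p q =
     (\<delta> (fst p) (fst q),
      \<theta> (fst p) (fst q) + ll (fst p) (snd q) + lr (snd p) (fst q) + \<mu> (snd p) (snd q))"

end

theory Submission
  imports Defs
begin

text \<open>
  Because the extension splits, \<open>\<pi>\<close> maps the complementary subalgebra \<open>S\<close> bijectively onto
  \<open>L\<close>, and the inverse \<open>\<sigma>\<close> is a BiHom-Lie morphism with \<open>\<pi> \<circ> \<sigma> = id\<close>. The linear bijection
  \<open>(x, v) \<mapsto> \<sigma> x + i v\<close> from \<open>L \<oplus> V\<close> onto \<open>M\<close> carries the bracket of \<open>M\<close> to the bracket of the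
  statement with \<open>\<theta> = 0\<close>, \<open>\<lambda>\<^sub>l(x, v) = i\<^sup>-\<^sup>1 [\<sigma> x, i v]\<close> and \<open>\<lambda>\<^sub>r(v, x) = i\<^sup>-\<^sup>1 [i v, \<sigma> x]\<close>.
  The representation identities are BiHom-skew-symmetry and the BiHom-Jacobi identity of \<open>M\<close>
  at \<open>\<sigma> x, \<sigma> y, i v\<close>, and the bijection itself is the required equivalence of extensions.
\<close>

lemmas linear_map_add = module_hom.add[OF module_hom_linearI]
lemmas linear_map_scale = module_hom.scale[OF module_hom_linearI]
lemmas linear_map_zero = module_hom.zero[OF module_hom_linearI]
lemmas linear_map_neg = module_hom.neg[OF module_hom_linearI]
lemmas linear_map_diff = module_hom.diff[OF module_hom_linearI]

lemma linear_imp_vector_space_domain: "Vector_Spaces.linear s1 s2 f \<Longrightarrow> vector_space s1"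
  by (simp add: Vector_Spaces.linear_iff)

lemma linear_imp_vector_space_codomain: "Vector_Spaces.linear s1 s2 f \<Longrightarrow> vector_space s2"
  by (simp add: Vector_Spaces.linear_iff)

lemma inj_linear_comp_imp_linear:
  assumes f: "Vector_Spaces.linear s2 s3 f" and "inj f"
    and fg: "Vector_Spaces.linear s1 s3 (f \<circ> g)"
  shows "Vector_Spaces.linear s1 s2 g"
proof -
  have "f (g (x + y)) = f (g x + g y)" for x y
    using linear_map_add[OF fg, of x y] linear_map_add[OF f] by simp
  moreover have "f (g (s1 c x)) = f (s2 c (g x))" for c x
    using linear_map_scale[OF fg, of c x] linear_map_scale[OF f] by simp
  ultimately show ?thesis
    using fg \<open>inj f\<close> linear_imp_vector_space_domain[OF f]
    by (simp add: Vector_Spaces.linear_iff inj_eq)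
qed

lemma vector_space_sum_scale:
  "vector_space sL \<Longrightarrow> vector_space sV \<Longrightarrow> vector_space (sum_scale sL sV)"
  unfolding vector_space_def sum_scale_def by (auto simp: prod_eq_iff)

lemma bilinear_map_linear_left: "bilinear_map s1 s2 s3 b \<Longrightarrow> Vector_Spaces.linear s1 s3 (\<lambda>x. b x y)"
  by (simp add: bilinear_map_def)

lemma bilinear_map_linear_right: "bilinear_map s1 s2 s3 b \<Longrightarrow> Vector_Spaces.linear s2 s3 (b x)"
  by (simp add: bilinear_map_def)

lemma bilinear_map_add_left: "bilinear_map s1 s2 s3 b \<Longrightarrow> b (x + x') y = b x y + b x' y"
  using linear_map_add[OF bilinear_map_linear_left] by blast

lemma bilinear_map_add_right: "bilinear_map s1 s2 s3 b \<Longrightarrow> b x (y + y') = b x y + b x y'"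
  using linear_map_add[OF bilinear_map_linear_right] by blast

lemma bilinear_map_zero_left: "bilinear_map s1 s2 s3 b \<Longrightarrow> b 0 y = 0"
  using linear_map_zero[OF bilinear_map_linear_left] by blast

lemma bilinear_map_zero_right: "bilinear_map s1 s2 s3 b \<Longrightarrow> b x 0 = 0"
  using linear_map_zero[OF bilinear_map_linear_right] by blast

lemma bilinear_map_compose:
  assumes "bilinear_map s1 s2 s3 b" "Vector_Spaces.linear t1 s1 f" "Vector_Spaces.linear t2 s2 g"
  shows "bilinear_map t1 t2 s3 (\<lambda>x y. b (f x) (g y))"
  using Vector_Spaces.linear_compose[OF assms(3) bilinear_map_linear_right[OF assms(1)]]
    Vector_Spaces.linear_compose[OF assms(2) bilinear_map_linear_left[OF assms(1)]]
  by (simp add: bilinear_map_def o_def)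

lemma inj_bilinear_comp_imp_bilinear:
  assumes f: "Vector_Spaces.linear s3 s4 f" and "inj f"
    and fb: "bilinear_map s1 s2 s4 (\<lambda>x y. f (b x y))"
  shows "bilinear_map s1 s2 s3 b"
  unfolding bilinear_map_def
proof (intro allI conjI)
  show "Vector_Spaces.linear s2 s3 (b x)" for x
    using bilinear_map_linear_right[OF fb] by (intro inj_linear_comp_imp_linear[OF f \<open>inj f\<close>]) (simp add: o_def)
  show "Vector_Spaces.linear s1 s3 (\<lambda>x. b x y)" for y
    using bilinear_map_linear_left[OF fb] by (intro inj_linear_comp_imp_linear[OF f \<open>inj f\<close>]) (simp add: o_def)
qed

lemma bilinear_map_zero:
  assumes "vector_space s1" "vector_space s2" "vector_space s3"
  shows "bilinear_map s1 s2 s3 (\<lambda>x y. 0)"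
  using assms module.scale_zero_right[of s3]
  by (simp add: bilinear_map_def Vector_Spaces.linear_iff module_iff_vector_space)

lemma BiHomLie_pullback:
  assumes hom: "BiHom_morphism s br \<alpha> \<beta> s' br' \<alpha>' \<beta>' f" and "inj f"
    and target: "BiHomLie s' br' \<alpha>' \<beta>'"
  shows "BiHomLie s br \<alpha> \<beta>"
proof -
  from hom have lin_f: "Vector_Spaces.linear s s' f" and f_\<alpha>: "f \<circ> \<alpha> = \<alpha>' \<circ> f"
    and f_\<beta>: "f \<circ> \<beta> = \<beta>' \<circ> f" and f_br: "\<And>x y. f (br x y) = br' (f x) (f y)"
    unfolding BiHom_morphism_def by blast+
  from target have bil': "bilinear_map s' s' s' br'" and lin_\<alpha>': "Vector_Spaces.linear s' s' \<alpha>'"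
    and lin_\<beta>': "Vector_Spaces.linear s' s' \<beta>'" and comm': "\<alpha>' \<circ> \<beta>' = \<beta>' \<circ> \<alpha>'"
    and skew': "\<And>x y. br' (\<beta>' x) (\<alpha>' y) = - br' (\<beta>' y) (\<alpha>' x)"
    and jacobi': "\<And>x y z. br' (\<beta>' (\<beta>' x)) (br' (\<beta>' y) (\<alpha>' z)) + br' (\<beta>' (\<beta>' y)) (br' (\<beta>' z) (\<alpha>' x))
              + br' (\<beta>' (\<beta>' z)) (br' (\<beta>' x) (\<alpha>' y)) = 0"
    unfolding BiHomLie_def by blast+
  have f_\<alpha>': "f (\<alpha> x) = \<alpha>' (f x)" and f_\<beta>': "f (\<beta> x) = \<beta>' (f x)" for x
    using fun_cong[OF f_\<alpha>, of x] fun_cong[OF f_\<beta>, of x] by simp_all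
  have f_eq: "f x = f y \<Longrightarrow> x = y" for x y
    using \<open>inj f\<close> by (simp add: inj_eq)
  have "bilinear_map s s s br"
    using bilinear_map_compose[OF bil' lin_f lin_f] f_br
    by (intro inj_bilinear_comp_imp_bilinear[OF lin_f \<open>inj f\<close>]) simp
  moreover have "Vector_Spaces.linear s s \<alpha>" "Vector_Spaces.linear s s \<beta>"
    using Vector_Spaces.linear_compose[OF lin_f lin_\<alpha>'] Vector_Spaces.linear_compose[OF lin_f lin_\<beta>'] f_\<alpha> f_\<beta>
    by (auto intro: inj_linear_comp_imp_linear[OF lin_f \<open>inj f\<close>])
  moreover have "\<alpha> \<circ> \<beta> = \<beta> \<circ> \<alpha>"
    using fun_cong[OF comm'] by (auto intro: f_eq simp: fun_eq_iff f_\<alpha>' f_\<beta>')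
  moreover have "br (\<beta> x) (\<alpha> y) = - br (\<beta> y) (\<alpha> x)" for x y
    using skew'[of "f x" "f y"] by (intro f_eq) (simp add: f_br f_\<alpha>' f_\<beta>' linear_map_neg[OF lin_f])
  moreover have "br (\<beta> (\<beta> x)) (br (\<beta> y) (\<alpha> z)) + br (\<beta> (\<beta> y)) (br (\<beta> z) (\<alpha> x))
      + br (\<beta> (\<beta> z)) (br (\<beta> x) (\<alpha> y)) = 0" for x y z
    using jacobi'[of "f x" "f y" "f z"]
    by (intro f_eq) (simp add: f_br f_\<alpha>' f_\<beta>' linear_map_add[OF lin_f] linear_map_zero[OF lin_f])
  ultimately show ?thesis
    unfolding BiHomLie_def by blast
qed

lemma BiHom_morphism_inv:
  assumes hom: "BiHom_morphism s br \<alpha> \<beta> s' br' \<alpha>' \<beta>' f" and "bij f"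
  shows "BiHom_morphism s' br' \<alpha>' \<beta>' s br \<alpha> \<beta> (inv f)"
proof -
  from hom have lin_f: "Vector_Spaces.linear s s' f" and f_\<alpha>: "f \<circ> \<alpha> = \<alpha>' \<circ> f"
    and f_\<beta>: "f \<circ> \<beta> = \<beta>' \<circ> f" and f_br: "\<And>x y. f (br x y) = br' (f x) (f y)"
    unfolding BiHom_morphism_def by blast+
  have f_eq: "f x = f y \<Longrightarrow> x = y" for x y
    using \<open>bij f\<close> by (simp add: bij_def inj_eq)
  have f_inv: "f (inv f y) = y" for y
    using \<open>bij f\<close> by (simp add: bij_def surj_f_inv_f)
  have "f \<circ> inv f = id"
    by (simp add: fun_eq_iff f_inv)
  then have "Vector_Spaces.linear s' s (inv f)"
    using vector_space.linear_id[OF linear_imp_vector_space_codomain[OF lin_f]]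
    by (intro inj_linear_comp_imp_linear[OF lin_f bij_is_inj[OF \<open>bij f\<close>]]) simp
  moreover have "inv f \<circ> \<alpha>' = \<alpha> \<circ> inv f" "inv f \<circ> \<beta>' = \<beta> \<circ> inv f"
    using fun_cong[OF f_\<alpha>] fun_cong[OF f_\<beta>] by (auto intro: f_eq simp: fun_eq_iff f_inv)
  moreover have "inv f (br' x y) = br (inv f x) (inv f y)" for x y
    by (rule f_eq) (simp add: f_inv f_br)
  ultimately show ?thesis
    unfolding BiHom_morphism_def by blast
qed

lemma BiHom_isoI:
  "BiHom_morphism s br \<alpha> \<beta> s' br' \<alpha>' \<beta>' f \<Longrightarrow> bij f \<Longrightarrow> BiHom_iso s br \<alpha> \<beta> s' br' \<alpha>' \<beta>' f"
  by (simp add: BiHom_iso_def BiHom_morphism_inv)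

lemma split_complement_bij_betw:
  assumes lin_\<pi>: "Vector_Spaces.linear sM sL \<pi>" and "surj \<pi>"
    and decomp: "\<And>m. \<exists>!p. fst p \<in> S \<and> \<pi> (snd p) = 0 \<and> m = fst p + snd p"
  shows "bij_betw \<pi> S UNIV"
proof (rule bij_betw_imageI)
  show "inj_on \<pi> S"
  proof (rule inj_onI)
    fix s t assume "s \<in> S" "t \<in> S" "\<pi> s = \<pi> t"
    then have "fst (s, 0) \<in> S \<and> \<pi> (snd (s, 0)) = 0 \<and> s = fst (s, 0) + snd (s, 0)"
      and "fst (t, s - t) \<in> S \<and> \<pi> (snd (t, s - t)) = 0 \<and> s = fst (t, s - t) + snd (t, s - t)"
      by (simp_all add: linear_map_zero[OF lin_\<pi>] linear_map_diff[OF lin_\<pi>])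
    with decomp[of s] have "(s, 0) = (t, s - t)" by blast
    then show "s = t" by simp
  qed
  have "x \<in> \<pi> ` S" for x
  proof -
    obtain m where "\<pi> m = x" using \<open>surj \<pi>\<close> by (metis surjD)
    moreover obtain p where "fst p \<in> S" "\<pi> (snd p) = 0" "m = fst p + snd p"
      using decomp[of m] by blast
    ultimately show ?thesis
      using linear_map_add[OF lin_\<pi>, of "fst p" "snd p"] by force
  qed
  then show "\<pi> ` S = UNIV" by blast
qed

lemma BiHom_subalgebra_section:
  assumes hom: "BiHom_morphism sM d' \<alpha>M \<beta>M sL \<delta> \<alpha> \<beta> \<pi>"
    and sub: "BiHom_subalgebra sM d' \<alpha>M \<beta>M S" and bij: "bij_betw \<pi> S UNIV"
  shows "BiHom_morphism sL \<delta> \<alpha> \<beta> sM d' \<alpha>M \<beta>M (the_inv_into S \<pi>)"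
proof -
  define \<sigma> where "\<sigma> = the_inv_into S \<pi>"
  from hom have lin_\<pi>: "Vector_Spaces.linear sM sL \<pi>" and \<pi>_\<alpha>: "\<pi> \<circ> \<alpha>M = \<alpha> \<circ> \<pi>"
    and \<pi>_\<beta>: "\<pi> \<circ> \<beta>M = \<beta> \<circ> \<pi>" and \<pi>_br: "\<And>x y. \<pi> (d' x y) = \<delta> (\<pi> x) (\<pi> y)"
    unfolding BiHom_morphism_def by blast+
  have vs_M: "vector_space sM" and vs_L: "vector_space sL"
    using linear_imp_vector_space_domain[OF lin_\<pi>] linear_imp_vector_space_codomain[OF lin_\<pi>] .
  from sub have subspace: "module.subspace sM S" and S_\<alpha>: "\<alpha>M ` S \<subseteq> S" and S_\<beta>: "\<beta>M ` S \<subseteq> S"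
    and S_br: "\<And>x y. x \<in> S \<Longrightarrow> y \<in> S \<Longrightarrow> d' x y \<in> S"
    unfolding BiHom_subalgebra_def by blast+
  have mod_M: "module sM"
    using vs_M by (simp add: module_iff_vector_space)
  note S_add = module.subspace_add[OF mod_M subspace]
    and S_scale = module.subspace_scale[OF mod_M subspace]
  have \<sigma>_in: "\<sigma> x \<in> S" and \<pi>_\<sigma>: "\<pi> (\<sigma> x) = x" for x
    using bij unfolding \<sigma>_def
    by (auto intro: the_inv_into_into f_the_inv_into_f_bij_betw simp: bij_betw_def)
  have \<sigma>_eq: "s \<in> S \<Longrightarrow> \<pi> s = x \<Longrightarrow> \<sigma> x = s" for s x
    using bij unfolding \<sigma>_def by (simp add: bij_betw_def the_inv_into_f_eq)
  have "\<sigma> (x + y) = \<sigma> x + \<sigma> y" "\<sigma> (sL c x) = sM c (\<sigma> x)" for c x y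
    by (auto intro!: \<sigma>_eq S_add S_scale \<sigma>_in
        simp: \<pi>_\<sigma> linear_map_add[OF lin_\<pi>] linear_map_scale[OF lin_\<pi>])
  with vs_L vs_M have "Vector_Spaces.linear sL sM \<sigma>"
    by (simp add: Vector_Spaces.linear_iff)
  moreover have "\<sigma> \<circ> \<alpha> = \<alpha>M \<circ> \<sigma>" "\<sigma> \<circ> \<beta> = \<beta>M \<circ> \<sigma>"
    using fun_cong[OF \<pi>_\<alpha>] fun_cong[OF \<pi>_\<beta>] S_\<alpha> S_\<beta> \<sigma>_in
    by (auto intro!: \<sigma>_eq simp: fun_eq_iff \<pi>_\<sigma>)
  moreover have "\<sigma> (\<delta> x y) = d' (\<sigma> x) (\<sigma> y)" for x y
    by (auto intro!: \<sigma>_eq S_br \<sigma>_in simp: \<pi>_br \<pi>_\<sigma>)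
  ultimately show ?thesis
    unfolding BiHom_morphism_def \<sigma>_def by blast
qed

lemma BiHom_split_extension_section:
  assumes "BiHom_split_extension sV \<mu> \<alpha>V \<beta>V sM d' \<alpha>M \<beta>M sL \<delta> \<alpha> \<beta> i \<pi>"
  obtains \<sigma> where "BiHom_morphism sL \<delta> \<alpha> \<beta> sM d' \<alpha>M \<beta>M \<sigma>" "\<And>x. \<pi> (\<sigma> x) = x"
proof -
  from assms obtain S where sub: "BiHom_subalgebra sM d' \<alpha>M \<beta>M S"
    and decomp: "\<And>m. \<exists>!p. fst p \<in> S \<and> \<pi> (snd p) = 0 \<and> m = fst p + snd p"
    unfolding BiHom_split_extension_def by blast
  from assms have hom: "BiHom_morphism sM d' \<alpha>M \<beta>M sL \<delta> \<alpha> \<beta> \<pi>" and "surj \<pi>"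
    unfolding BiHom_split_extension_def BiHom_extension_def by blast+
  then have bij: "bij_betw \<pi> S UNIV"
    using decomp by (intro split_complement_bij_betw) (auto simp: BiHom_morphism_def)
  show thesis
    using that BiHom_subalgebra_section[OF hom sub bij] f_the_inv_into_f_bij_betw[OF bij] by blast
qed

locale BiHom_extension_with_section =
  fixes sV :: "'k::field \<Rightarrow> 'v::ab_group_add \<Rightarrow> 'v" and \<mu> :: "'v \<Rightarrow> 'v \<Rightarrow> 'v" and \<alpha>V \<beta>V :: "'v \<Rightarrow> 'v"
    and sM :: "'k \<Rightarrow> 'm::ab_group_add \<Rightarrow> 'm" and d' :: "'m \<Rightarrow> 'm \<Rightarrow> 'm" and \<alpha>M \<beta>M :: "'m \<Rightarrow> 'm"
    and sL :: "'k \<Rightarrow> 'l::ab_group_add \<Rightarrow> 'l" and \<delta> :: "'l \<Rightarrow> 'l \<Rightarrow> 'l" and \<alpha> \<beta> :: "'l \<Rightarrow> 'l"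
    and i :: "'v \<Rightarrow> 'm" and \<pi> :: "'m \<Rightarrow> 'l" and \<sigma> :: "'l \<Rightarrow> 'm"
  assumes extension: "BiHom_extension sV \<mu> \<alpha>V \<beta>V sM d' \<alpha>M \<beta>M sL \<delta> \<alpha> \<beta> i \<pi>"
    and section_morphism: "BiHom_morphism sL \<delta> \<alpha> \<beta> sM d' \<alpha>M \<beta>M \<sigma>"
    and \<pi>_\<sigma>: "\<And>x. \<pi> (\<sigma> x) = x"
begin

lemma M_BiHomLie: "BiHomLie sM d' \<alpha>M \<beta>M"
  using extension by (simp add: BiHom_extension_def)

lemma V_BiHomLie: "BiHomLie sV \<mu> \<alpha>V \<beta>V"
  using extension by (simp add: BiHom_extension_def)

lemma M_bracket_bilinear: "bilinear_map sM sM sM d'"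
  and M_skew: "d' (\<beta>M x) (\<alpha>M y) = - d' (\<beta>M y) (\<alpha>M x)"
  and M_jacobi: "d' (\<beta>M (\<beta>M x)) (d' (\<beta>M y) (\<alpha>M z)) + d' (\<beta>M (\<beta>M y)) (d' (\<beta>M z) (\<alpha>M x))
      + d' (\<beta>M (\<beta>M z)) (d' (\<beta>M x) (\<alpha>M y)) = 0"
  and M_\<alpha>_linear: "Vector_Spaces.linear sM sM \<alpha>M"
  and M_\<beta>_linear: "Vector_Spaces.linear sM sM \<beta>M"
  using M_BiHomLie unfolding BiHomLie_def by blast+

lemma i_morphism: "BiHom_morphism sV \<mu> \<alpha>V \<beta>V sM d' \<alpha>M \<beta>M i"
  using extension by (simp add: BiHom_extension_def)

lemma i_linear: "Vector_Spaces.linear sV sM i"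
  and i_\<alpha>: "i (\<alpha>V v) = \<alpha>M (i v)"
  and i_\<beta>: "i (\<beta>V v) = \<beta>M (i v)"
  and i_bracket: "i (\<mu> v w) = d' (i v) (i w)"
  using i_morphism by (simp_all add: BiHom_morphism_def fun_eq_iff)

lemma \<sigma>_linear: "Vector_Spaces.linear sL sM \<sigma>"
  and \<sigma>_\<alpha>: "\<sigma> (\<alpha> x) = \<alpha>M (\<sigma> x)"
  and \<sigma>_\<beta>: "\<sigma> (\<beta> x) = \<beta>M (\<sigma> x)"
  and \<sigma>_bracket: "\<sigma> (\<delta> x y) = d' (\<sigma> x) (\<sigma> y)"
  using section_morphism by (simp_all add: BiHom_morphism_def fun_eq_iff)

lemma \<pi>_morphism: "BiHom_morphism sM d' \<alpha>M \<beta>M sL \<delta> \<alpha> \<beta> \<pi>"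
  using extension by (simp add: BiHom_extension_def)

lemma \<pi>_linear: "Vector_Spaces.linear sM sL \<pi>"
  and \<pi>_bracket: "\<pi> (d' m n) = \<delta> (\<pi> m) (\<pi> n)"
  using \<pi>_morphism by (simp_all add: BiHom_morphism_def)

lemma inj_i: "inj i"
  and range_i: "range i = {m. \<pi> m = 0}"
  using extension by (simp_all add: BiHom_extension_def)

lemma \<pi>_i: "\<pi> (i v) = 0"
  using rangeI[of i v] by (simp add: range_i)

lemma i_inv_i: "\<pi> m = 0 \<Longrightarrow> i (inv i m) = m"
  by (rule f_inv_into_f) (simp add: range_i)

lemma L_bracket_bilinear: "bilinear_map sL sL sL \<delta>"
proof -
  have "BiHomLie sL \<delta> \<alpha> \<beta>"
    using extension by (simp add: BiHom_extension_def)
  then show ?thesis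
    unfolding BiHomLie_def by blast
qed

lemmas i_simps = linear_map_add[OF i_linear] linear_map_zero[OF i_linear] linear_map_neg[OF i_linear]
  i_\<alpha> i_\<beta> i_bracket
lemmas \<sigma>_simps = linear_map_add[OF \<sigma>_linear] linear_map_zero[OF \<sigma>_linear] \<sigma>_\<alpha> \<sigma>_\<beta> \<sigma>_bracket
lemmas M_bracket_simps = bilinear_map_add_left[OF M_bracket_bilinear] bilinear_map_add_right[OF M_bracket_bilinear]

definition act_left :: "'l \<Rightarrow> 'v \<Rightarrow> 'v" where
  "act_left x v = inv i (d' (\<sigma> x) (i v))"

definition act_right :: "'v \<Rightarrow> 'l \<Rightarrow> 'v" where
  "act_right v x = inv i (d' (i v) (\<sigma> x))"

lemma i_act_left: "i (act_left x v) = d' (\<sigma> x) (i v)"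
  unfolding act_left_def
  by (rule i_inv_i) (simp add: \<pi>_bracket \<pi>_\<sigma> \<pi>_i bilinear_map_zero_right[OF L_bracket_bilinear])

lemma i_act_right: "i (act_right v x) = d' (i v) (\<sigma> x)"
  unfolding act_right_def
  by (rule i_inv_i) (simp add: \<pi>_bracket \<pi>_\<sigma> \<pi>_i bilinear_map_zero_left[OF L_bracket_bilinear])

lemma act_left_bilinear: "bilinear_map sL sV sV act_left"
proof (rule inj_bilinear_comp_imp_bilinear[OF i_linear inj_i])
  show "bilinear_map sL sV sM (\<lambda>x v. i (act_left x v))"
    unfolding i_act_left by (rule bilinear_map_compose[OF M_bracket_bilinear \<sigma>_linear i_linear])
qed

lemma act_right_bilinear: "bilinear_map sV sL sV act_right"
proof (rule inj_bilinear_comp_imp_bilinear[OF i_linear inj_i])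
  show "bilinear_map sV sL sM (\<lambda>v x. i (act_right v x))"
    unfolding i_act_right by (rule bilinear_map_compose[OF M_bracket_bilinear i_linear \<sigma>_linear])
qed

lemma act_representation: "BiHom_representation \<delta> \<alpha> \<beta> \<alpha>V \<beta>V act_left act_right"
  unfolding BiHom_representation_def
proof (intro conjI allI)
  show "\<alpha>V \<circ> \<beta>V = \<beta>V \<circ> \<alpha>V"
    using V_BiHomLie unfolding BiHomLie_def by blast
  show "act_right (\<beta>V v) (\<alpha> y) = - act_left (\<beta> y) (\<alpha>V v)" for y v
    using M_skew[of "i v" "\<sigma> y"]
    by (intro injD[OF inj_i]) (simp add: i_act_left i_act_right i_simps \<sigma>_simps)
  show "act_left (\<beta> (\<beta> x)) (act_left (\<beta> y) (\<alpha>V v)) + act_left (\<beta> (\<beta> y)) (act_right (\<beta>V v) (\<alpha> x))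
      + act_right (\<beta>V (\<beta>V v)) (\<delta> (\<beta> x) (\<alpha> y)) = 0" for x y v
    using M_jacobi[of "\<sigma> x" "\<sigma> y" "i v"]
    by (intro injD[OF inj_i]) (simp add: i_act_left i_act_right i_simps \<sigma>_simps)
qed

definition recompose :: "'l \<times> 'v \<Rightarrow> 'm" where
  "recompose p = \<sigma> (fst p) + i (snd p)"

lemma \<pi>_recompose: "\<pi> (recompose p) = fst p"
  by (simp add: recompose_def linear_map_add[OF \<pi>_linear] \<pi>_\<sigma> \<pi>_i)

lemma recompose_morphism:
  "BiHom_morphism (sum_scale sL sV) (semidirect_bracket \<delta> (\<lambda>_ _. 0) act_left act_right \<mu>)
     (sum_map \<alpha> \<alpha>V) (sum_map \<beta> \<beta>V) sM d' \<alpha>M \<beta>M recompose"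
  unfolding BiHom_morphism_def
proof (intro conjI allI)
  have vs_M: "vector_space sM"
    using linear_imp_vector_space_codomain[OF i_linear] .
  have "vector_space (sum_scale sL sV)"
    using vector_space_sum_scale linear_imp_vector_space_domain[OF \<sigma>_linear]
      linear_imp_vector_space_domain[OF i_linear] by blast
  with vs_M show "Vector_Spaces.linear (sum_scale sL sV) sM recompose"
    by (simp add: Vector_Spaces.linear_iff recompose_def sum_scale_def ac_simps
        linear_map_add[OF \<sigma>_linear] linear_map_add[OF i_linear]
        linear_map_scale[OF \<sigma>_linear] linear_map_scale[OF i_linear]
        module.scale_right_distrib[OF vs_M[unfolded module_iff_vector_space[symmetric]]])
  show "recompose \<circ> sum_map \<alpha> \<alpha>V = \<alpha>M \<circ> recompose"
    by (simp add: fun_eq_iff recompose_def sum_map_def \<sigma>_\<alpha> i_\<alpha> linear_map_add[OF M_\<alpha>_linear])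
  show "recompose \<circ> sum_map \<beta> \<beta>V = \<beta>M \<circ> recompose"
    by (simp add: fun_eq_iff recompose_def sum_map_def \<sigma>_\<beta> i_\<beta> linear_map_add[OF M_\<beta>_linear])
  show "recompose (semidirect_bracket \<delta> (\<lambda>_ _. 0) act_left act_right \<mu> p q)
      = d' (recompose p) (recompose q)" for p q
    by (simp add: recompose_def semidirect_bracket_def i_act_left i_act_right
        \<sigma>_simps i_simps M_bracket_simps ac_simps)
qed

lemma bij_recompose: "bij recompose"
proof (rule bijI)
  show "inj recompose"
  proof (rule injI)
    fix p q assume eq: "recompose p = recompose q"
    then have "fst p = fst q"
      using \<pi>_recompose by metis
    with eq have "i (snd p) = i (snd q)"
      by (simp add: recompose_def)
    with \<open>fst p = fst q\<close> show "p = q"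
      using inj_i by (simp add: inj_eq prod_eq_iff)
  qed
  have "recompose (\<pi> m, inv i (m - \<sigma> (\<pi> m))) = m" for m
    by (simp add: recompose_def i_inv_i linear_map_diff[OF \<pi>_linear] \<pi>_\<sigma>)
  then show "surj recompose"
    by (rule surjI)
qed

lemma semidirect_BiHomLie:
  "BiHomLie (sum_scale sL sV) (semidirect_bracket \<delta> (\<lambda>_ _. 0) act_left act_right \<mu>)
     (sum_map \<alpha> \<alpha>V) (sum_map \<beta> \<beta>V)"
  by (rule BiHomLie_pullback[OF recompose_morphism bij_is_inj[OF bij_recompose] M_BiHomLie])

lemma semidirect_equivalent:
  "BiHom_ext_equivalent sV (sum_scale sL sV) (semidirect_bracket \<delta> (\<lambda>_ _. 0) act_left act_right \<mu>)
     (sum_map \<alpha> \<alpha>V) (sum_map \<beta> \<beta>V) sL (\<lambda>v. (0, v)) fst sV sM d' \<alpha>M \<beta>M sL i \<pi>"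
  unfolding BiHom_ext_equivalent_def
proof (intro exI conjI)
  show "Vector_Spaces.linear sV sV id"
    using vector_space.linear_id linear_imp_vector_space_domain[OF i_linear] .
  show "Vector_Spaces.linear sL sL id"
    using vector_space.linear_id linear_imp_vector_space_domain[OF \<sigma>_linear] .
  show "BiHom_iso (sum_scale sL sV) (semidirect_bracket \<delta> (\<lambda>_ _. 0) act_left act_right \<mu>)
      (sum_map \<alpha> \<alpha>V) (sum_map \<beta> \<beta>V) sM d' \<alpha>M \<beta>M recompose"
    using BiHom_isoI[OF recompose_morphism bij_recompose] .
  show "recompose \<circ> (\<lambda>v. (0, v)) = i \<circ> id"
    by (simp add: fun_eq_iff recompose_def \<sigma>_simps)
  show "\<pi> \<circ> recompose = id \<circ> fst"
    by (simp add: fun_eq_iff \<pi>_recompose)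
qed

end

lemma BiHom_2cocycle_zero: "bilinear_map sL sV sV ll \<Longrightarrow> BiHom_2cocycle \<delta> \<alpha> \<beta> ll (\<lambda>_ _. 0)"
  by (simp add: BiHom_2cocycle_def bilinear_map_zero_right)

lemma semidirect_split_extension:
  fixes sL :: "'k::field \<Rightarrow> 'l::ab_group_add \<Rightarrow> 'l" and sV :: "'k \<Rightarrow> 'v::ab_group_add \<Rightarrow> 'v"
  assumes L: "BiHomLie sL \<delta> \<alpha> \<beta>" and V: "BiHomLie sV \<mu> \<alpha>V \<beta>V"
    and ll: "bilinear_map sL sV sV ll" and lr: "bilinear_map sV sL sV lr"
    and P: "BiHomLie (sum_scale sL sV) (semidirect_bracket \<delta> (\<lambda>_ _. 0) ll lr \<mu>) (sum_map \<alpha> \<alpha>V) (sum_map \<beta> \<beta>V)"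
  shows "BiHom_split_extension sV \<mu> \<alpha>V \<beta>V
    (sum_scale sL sV) (semidirect_bracket \<delta> (\<lambda>_ _. 0) ll lr \<mu>) (sum_map \<alpha> \<alpha>V) (sum_map \<beta> \<beta>V)
    sL \<delta> \<alpha> \<beta> (\<lambda>v. (0, v)) fst"
proof -
  let ?d = "semidirect_bracket \<delta> (\<lambda>_ _. 0) ll lr \<mu>"
  from L have \<delta>: "bilinear_map sL sL sL \<delta>" and \<alpha>: "Vector_Spaces.linear sL sL \<alpha>"
    and \<beta>: "Vector_Spaces.linear sL sL \<beta>"
    unfolding BiHomLie_def by blast+
  from V have \<mu>: "bilinear_map sV sV sV \<mu>" and \<alpha>V: "Vector_Spaces.linear sV sV \<alpha>V"
    and \<beta>V: "Vector_Spaces.linear sV sV \<beta>V"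
    unfolding BiHomLie_def by blast+
  have vs_L: "vector_space sL" and vs_V: "vector_space sV"
    using linear_imp_vector_space_domain \<alpha> \<alpha>V by blast+
  note zeros = linear_map_zero[OF \<alpha>] linear_map_zero[OF \<beta>] linear_map_zero[OF \<alpha>V] linear_map_zero[OF \<beta>V]
    bilinear_map_zero_left[OF \<delta>] bilinear_map_zero_right[OF \<delta>]
    bilinear_map_zero_left[OF \<mu>] bilinear_map_zero_right[OF \<mu>]
    bilinear_map_zero_left[OF ll] bilinear_map_zero_right[OF ll]
    bilinear_map_zero_left[OF lr] bilinear_map_zero_right[OF lr]
    module.scale_zero_right[OF vs_L[unfolded module_iff_vector_space[symmetric]]]
    module.scale_zero_right[OF vs_V[unfolded module_iff_vector_space[symmetric]]]
  have "BiHom_morphism sV \<mu> \<alpha>V \<beta>V (sum_scale sL sV) ?d (sum_map \<alpha> \<alpha>V) (sum_map \<beta> \<beta>V) (\<lambda>v. (0, v))"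
    using vs_V vector_space_sum_scale[OF vs_L vs_V]
    by (simp add: BiHom_morphism_def Vector_Spaces.linear_iff fun_eq_iff sum_scale_def sum_map_def
        semidirect_bracket_def zeros)
  moreover have "BiHom_morphism (sum_scale sL sV) ?d (sum_map \<alpha> \<alpha>V) (sum_map \<beta> \<beta>V) sL \<delta> \<alpha> \<beta> fst"
    using vs_L vector_space_sum_scale[OF vs_L vs_V]
    by (simp add: BiHom_morphism_def Vector_Spaces.linear_iff fun_eq_iff sum_scale_def sum_map_def
        semidirect_bracket_def)
  moreover have "inj (\<lambda>v. (0::'l, v))" "surj fst" "range (\<lambda>v. (0, v)) = {p. fst p = 0}"
    by (auto intro: injI surjI[of _ "\<lambda>x. (x, 0)"] simp: image_iff prod_eq_iff)
  \<comment> \<open>\<open>L \<times> {0}\<close> is closed under the bracket only because the cocycle vanishes\<close>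
  moreover have "BiHom_subalgebra (sum_scale sL sV) ?d (sum_map \<alpha> \<alpha>V) (sum_map \<beta> \<beta>V) {p. snd p = 0}"
    using vector_space_sum_scale[OF vs_L vs_V]
    by (auto simp: BiHom_subalgebra_def module.subspace_def module_iff_vector_space
        sum_scale_def sum_map_def semidirect_bracket_def zeros)
  moreover have "\<exists>!p. fst p \<in> {p. snd p = 0} \<and> fst (snd p) = 0 \<and> m = fst p + snd p" for m :: "'l \<times> 'v"
    by (rule ex1I[of _ "((fst m, 0), (0, snd m))"]) (auto simp: prod_eq_iff)
  ultimately show ?thesis
    using L V P unfolding BiHom_split_extension_def BiHom_extension_def by blast
qed

theorem mainTheorem2:
  fixes sL :: "'k::field \<Rightarrow> 'l::ab_group_add \<Rightarrow> 'l"
    and sV :: "'k \<Rightarrow> 'v::ab_group_add \<Rightarrow> 'v"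
    and sM :: "'k \<Rightarrow> 'm::ab_group_add \<Rightarrow> 'm"
    and \<delta> :: "'l \<Rightarrow> 'l \<Rightarrow> 'l" and \<alpha> \<beta> :: "'l \<Rightarrow> 'l"
    and \<mu> :: "'v \<Rightarrow> 'v \<Rightarrow> 'v" and \<alpha>V \<beta>V :: "'v \<Rightarrow> 'v"
    and d' :: "'m \<Rightarrow> 'm \<Rightarrow> 'm" and \<alpha>M \<beta>M :: "'m \<Rightarrow> 'm"
    and i :: "'v \<Rightarrow> 'm" and \<pi> :: "'m \<Rightarrow> 'l"
  assumes "BiHomLie sL \<delta> \<alpha> \<beta>"
    and "BiHomLie sV \<mu> \<alpha>V \<beta>V"
    and "BiHomLie sM d' \<alpha>M \<beta>M"
    and "BiHom_split_extension sV \<mu> \<alpha>V \<beta>V sM d' \<alpha>M \<beta>M sL \<delta> \<alpha> \<beta> i \<pi>"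
  shows "\<exists>ll lr \<theta>.
           bilinear_map sL sV sV ll \<and> bilinear_map sV sL sV lr \<and> bilinear_map sL sL sV \<theta> \<and>
           BiHom_representation \<delta> \<alpha> \<beta> \<alpha>V \<beta>V ll lr \<and>
           BiHom_2cocycle \<delta> \<alpha> \<beta> ll \<theta> \<and>
           BiHom_split_extension sV \<mu> \<alpha>V \<beta>V
             (sum_scale sL sV) (semidirect_bracket \<delta> \<theta> ll lr \<mu>) (sum_map \<alpha> \<alpha>V) (sum_map \<beta> \<beta>V)
             sL \<delta> \<alpha> \<beta> (\<lambda>v. (0, v)) fst \<and>
           BiHom_ext_equivalent
             sV (sum_scale sL sV) (semidirect_bracket \<delta> \<theta> ll lr \<mu>) (sum_map \<alpha> \<alpha>V) (sum_map \<beta> \<beta>V)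
             sL (\<lambda>v. (0, v)) fst
             sV sM d' \<alpha>M \<beta>M sL i \<pi>"
proof -
  obtain \<sigma> where "BiHom_morphism sL \<delta> \<alpha> \<beta> sM d' \<alpha>M \<beta>M \<sigma>" "\<And>x. \<pi> (\<sigma> x) = x"
    using BiHom_split_extension_section[OF assms(4)] by blast
  then interpret E: BiHom_extension_with_section sV \<mu> \<alpha>V \<beta>V sM d' \<alpha>M \<beta>M sL \<delta> \<alpha> \<beta> i \<pi> \<sigma>
    using assms(4) by unfold_locales (simp_all add: BiHom_split_extension_def)
  have "bilinear_map sL sL sV (\<lambda>_ _. 0)"
    using bilinear_map_zero linear_imp_vector_space_domain E.\<sigma>_linear E.i_linear by metis
  then show ?thesis
    using E.act_left_bilinear E.act_right_bilinear E.act_representation BiHom_2cocycle_zero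
      semidirect_split_extension[OF assms(1,2) E.act_left_bilinear E.act_right_bilinear E.semidirect_BiHomLie]
      E.semidirect_equivalent
    by blast
qed

end
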